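(* Let $G$ be an abelian group and let $A,B\subseteq G$ be finite, nonempty subsets with $H=\mathsf H(A+B)=\mathsf H(B)$. Then $|(A\cup \{x\})+B|\geq |(A\cup \{x\})+H|+|B+H|-|H|$ for any $x\in G$.
   Context: $\mathsf H(A)=\{g\in G:g+A=A\}$ denotes the stabilizer of $A$; $A+B=\{a+b:a\in A,b\in B\}$. *)

theory Defs
  imports Main
begin

definition sumset :: "'a::ab_group_add set \<Rightarrow> 'a set \<Rightarrow> 'a set" where
  "sumset A B = {a + b | a b. a \<in> A \<and> b \<in> B}"

definition stab :: "'a::ab_group_add set \<Rightarrow> 'a set" where
  "stab A = {g. (\<lambda>a. g + a) ` A = A}"

end

theory Submission
  imports Defs
begin

text \<open>Write \<open>H(C)\<close> for the stabilizer of \<open>C\<close>. For finite nonempty \<open>C1, C2\<close> the quantity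
  \<open>|C| + |H(C)|\<close> of the union is at least the smaller of its values on \<open>C1\<close> and \<open>C2\<close>:
  \<open>H(C1) \<inter> H(C2)\<close> stabilizes \<open>C1 \<union> C2\<close>, and counting inside a coset of \<open>H(C1) + H(C2)\<close> shows
  that \<open>C1 - C2\<close> or \<open>C2 - C1\<close> is large. Dyson e-transforms preserve \<open>|A| + |B|\<close>, shrink \<open>B\<close>
  and keep the sumset inside \<open>A + B\<close>, and the transformed sumsets cover \<open>A + B\<close>; so induction
  on \<open>|B|\<close> gives \<open>|A| + |B| \<le> |A + B| + |H(A + B)|\<close>, which applied to \<open>A + H\<close> and \<open>B + H\<close>
  is Kneser's theorem \<open>|A + H| + |B + H| \<le> |A + B| + |H|\<close> for \<open>H = H(A + B)\<close>.

  If \<open>x + B \<subseteq> A + B\<close>, Kneser's theorem for \<open>A \<union> {x}\<close> is the claim. Otherwise \<open>x + y \<notin> A + B\<close>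
  for some \<open>y \<in> B\<close>; since \<open>H\<close> stabilizes both \<open>B\<close> and \<open>A + B\<close>, the coset \<open>x + y + H\<close> lies in
  \<open>(A \<union> {x}) + B\<close> but not in \<open>A + B\<close>, while \<open>|(A \<union> {x}) + H| \<le> |A + H| + |H|\<close>.\<close>

lemma add_in_sumset [intro]: "a \<in> A \<Longrightarrow> b \<in> B \<Longrightarrow> a + b \<in> sumset A B"
  by (auto simp: sumset_def)

lemma finite_sumset: "finite A \<Longrightarrow> finite B \<Longrightarrow> finite (sumset A B)"
  by (simp add: sumset_def finite_image_set2)

lemma sumset_eq_empty_iff [simp]: "sumset A B = {} \<longleftrightarrow> A = {} \<or> B = {}"
  by (auto simp: sumset_def)

lemma sumset_insert: "sumset (insert x A) B = (+) x ` B \<union> sumset A B"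
  by (auto simp: sumset_def)

lemma card_translate: "card ((+) g ` S) = card (S :: 'a::ab_group_add set)"
  by (rule card_image) (simp add: inj_on_def)

lemma card_le_card_if_translate_subset:
  fixes S X :: "'a::ab_group_add set"
  assumes "(+) g ` S \<subseteq> X" "finite X"
  shows "card S \<le> card X"
  using card_mono[OF assms(2,1)] by (simp add: card_translate)

lemma stab_add_mem: "g \<in> stab S \<Longrightarrow> x \<in> S \<Longrightarrow> g + x \<in> S"
  unfolding stab_def by blast

lemma zero_in_stab [simp]: "0 \<in> stab S"
  by (simp add: stab_def)

lemma stab_uminus:
  assumes "g \<in> stab S" shows "- g \<in> stab S"
proof -
  have "(+) (- g) ` S = (+) (- g) ` (+) g ` S"
    using assms by (simp add: stab_def)
  also have "\<dots> = S"
    by (simp add: image_image)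
  finally show ?thesis
    by (simp add: stab_def)
qed

lemma stab_add: "g \<in> stab S \<Longrightarrow> h \<in> stab S \<Longrightarrow> g + h \<in> stab S"
  unfolding stab_def by (simp add: image_image add.assoc flip: image_image[of "(+) g" "(+) h"])

lemma stab_diff: "g \<in> stab S \<Longrightarrow> h \<in> stab S \<Longrightarrow> g - h \<in> stab S"
  using stab_add stab_uminus by (metis diff_conv_add_uminus)

lemma stab_add_mem_iff: "g \<in> stab S \<Longrightarrow> g + x \<in> S \<longleftrightarrow> x \<in> S"
  using stab_add_mem[of g S x] stab_add_mem[of "- g" S "g + x"] stab_uminus[of g S]
  by (auto simp: add.assoc[symmetric])

lemma in_stab_iff:
  assumes "finite S" shows "g \<in> stab S \<longleftrightarrow> (\<forall>x\<in>S. g + x \<in> S)"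
proof
  assume "\<forall>x\<in>S. g + x \<in> S"
  then have "(+) g ` S \<subseteq> S" by blast
  then show "g \<in> stab S"
    using card_subset_eq[OF assms] card_translate[of g S] by (simp add: stab_def)
qed (auto intro: stab_add_mem)

lemma stab_subset_translate:
  assumes "s \<in> S" shows "stab S \<subseteq> (\<lambda>x. x - s) ` S"
proof
  fix g assume "g \<in> stab S"
  then have "g + s \<in> S" using assms by (rule stab_add_mem)
  then show "g \<in> (\<lambda>x. x - s) ` S" by (rule rev_image_eqI) simp
qed

lemma finite_stab: "finite S \<Longrightarrow> S \<noteq> {} \<Longrightarrow> finite (stab S)"
  using stab_subset_translate finite_subset by blast

lemma stab_Int_stab_subset_stab_Un: "stab S \<inter> stab T \<subseteq> stab (S \<union> T)"
  by (auto simp: stab_def image_Un)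

lemma translate_sumset: "(+) g ` sumset A B = sumset ((+) g ` A) B"
  unfolding sumset_def by (auto simp: image_iff) (metis add.assoc)+

lemma stab_subset_stab_sumset: "stab A \<subseteq> stab (sumset A B)"
  by (auto simp: stab_def translate_sumset)

text \<open>The translates \<open>t0 + W\<close> and \<open>w0 + T\<close> lie in \<open>T + W\<close> and meet in a translate of
  \<open>(T - t0) \<inter> (W - w0)\<close>.\<close>

lemma card_add_card_le_sumset:
  fixes T W :: "'a::ab_group_add set"
  assumes "finite T" "finite W" "t0 \<in> T" "w0 \<in> W"
  shows "card T + card W \<le> card (sumset T W) + card ((\<lambda>t. t - t0) ` T \<inter> (\<lambda>w. w - w0) ` W)"
proof -
  define D where "D = (\<lambda>t. t - t0) ` T \<inter> (\<lambda>w. w - w0) ` W"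
  let ?U = "(+) t0 ` W" and ?V = "(+) w0 ` T"
  have "?U \<union> ?V \<subseteq> sumset T W"
    using assms by (auto simp: add.commute[of w0])
  then have Un: "card (?U \<union> ?V) \<le> card (sumset T W)"
    by (simp add: card_mono finite_sumset assms)
  have "?U \<inter> ?V \<subseteq> (+) (t0 + w0) ` D"
  proof
    fix z assume "z \<in> ?U \<inter> ?V"
    then obtain w t where wt: "w \<in> W" "t \<in> T" and z: "z = t0 + w" "z = w0 + t"
      by auto
    then have "w - w0 = t - t0"
      by (simp add: algebra_simps)
    with wt have "w - w0 \<in> D"
      unfolding D_def by (metis IntI image_eqI)
    moreover have "z = t0 + w0 + (w - w0)"
      using z by simp
    ultimately show "z \<in> (+) (t0 + w0) ` D"
      by blast
  qed
  then have Int: "card (?U \<inter> ?V) \<le> card D"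
    using card_mono[of "(+) (t0 + w0) ` D"] assms by (simp add: D_def card_translate)
  have "card ?U + card ?V = card (?U \<union> ?V) + card (?U \<inter> ?V)"
    by (rule card_Un_Int) (use assms in auto)
  with Un Int show ?thesis
    by (simp add: D_def card_translate)
qed

lemma card_add_card_le_sumset_stab:
  assumes "finite (stab P)" "finite (stab Q)" "T \<subseteq> stab P" "W \<subseteq> stab Q" "T \<noteq> {}" "W \<noteq> {}"
  shows "card T + card W \<le> card (sumset T W) + card (stab P \<inter> stab Q)"
proof -
  obtain t0 w0 where "t0 \<in> T" "w0 \<in> W" using assms by blast
  moreover have "(\<lambda>t. t - t0) ` T \<subseteq> stab P" "(\<lambda>w. w - w0) ` W \<subseteq> stab Q"
    using calculation assms(3,4) by (auto intro!: stab_diff)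
  then have "card ((\<lambda>t. t - t0) ` T \<inter> (\<lambda>w. w - w0) ` W) \<le> card (stab P \<inter> stab Q)"
    using assms(1) by (intro card_mono) auto
  moreover have "finite T" "finite W"
    using assms finite_subset by blast+
  ultimately show ?thesis
    using card_add_card_le_sumset[of T W t0 w0] by linarith
qed

lemma translate_sumset_slices_subset_Diff:
  "(+) y ` sumset {h \<in> stab P. y + h \<in> Q} {g \<in> stab Q. y + g \<notin> P} \<subseteq> Q - P"
proof
  fix z assume "z \<in> (+) y ` sumset {h \<in> stab P. y + h \<in> Q} {g \<in> stab Q. y + g \<notin> P}"
  then obtain h g where h: "h \<in> stab P" "y + h \<in> Q" and g: "g \<in> stab Q" "y + g \<notin> P"
    and z: "z = y + (h + g)" by (auto simp: sumset_def)
  have "g + (y + h) \<in> Q" using g h by (blast intro: stab_add_mem)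
  moreover have "h + (y + g) \<notin> P" using g h by (simp add: stab_add_mem_iff)
  ultimately show "z \<in> Q - P" using z by (simp add: ac_simps)
qed

lemma card_filter_add_card_filter_not:
  "finite A \<Longrightarrow> card {x \<in> A. P x} + card {x \<in> A. \<not> P x} = card A"
  using card_Int_Diff[of A "Collect P"] by (simp add: Int_def set_diff_eq)

lemma card_stab_le_card_Diff:
  fixes P Q :: "'a::ab_group_add set"
  assumes "finite P" "finite Q" "P \<noteq> {}" "y \<in> Q" "y \<notin> P"
  shows "card (stab P) \<le> card (Q - P) + card (stab P \<inter> stab Q)
    \<or> card (stab Q) \<le> card (P - Q) + card (stab P \<inter> stab Q)
    \<or> card (stab Q) \<le> card (Q - P)"
proof -
  define T where "T = {h \<in> stab P. y + h \<in> Q}"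
  define W where "W = {g \<in> stab Q. y + g \<notin> P}"
  define T' where "T' = {g \<in> stab Q. y + g \<in> P}"
  define W' where "W' = {h \<in> stab P. y + h \<notin> Q}"
  have fin: "finite (stab P)" "finite (stab Q)"
    using assms by (auto intro: finite_stab)
  have card_stab: "card (stab P) = card T + card W'" "card (stab Q) = card T' + card W"
    using card_filter_add_card_filter_not[OF fin(1), of "\<lambda>h. y + h \<in> Q"]
      card_filter_add_card_filter_not[OF fin(2), of "\<lambda>g. y + g \<in> P"]
    by (simp_all add: T_def W_def T'_def W'_def)
  have "(+) y ` sumset T W \<subseteq> Q - P" "(+) y ` sumset T' W' \<subseteq> P - Q"
    unfolding T_def W_def T'_def W'_def by (rule translate_sumset_slices_subset_Diff)+
  then have sumsets: "card (sumset T W) \<le> card (Q - P)" "card (sumset T' W') \<le> card (P - Q)"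
    using assms by (simp_all add: card_le_card_if_translate_subset)
  have "T \<subseteq> stab P" "W \<subseteq> stab Q" "T' \<subseteq> stab Q" "W' \<subseteq> stab P"
    by (auto simp: T_def W_def T'_def W'_def)
  note subsets = this
  have "0 \<in> T" "0 \<in> W"
    using assms by (simp_all add: T_def W_def)
  then have "T \<noteq> {}" "W \<noteq> {}"
    by blast+
  then have TW: "card T + card W \<le> card (Q - P) + card (stab P \<inter> stab Q)"
    using card_add_card_le_sumset_stab[OF fin subsets(1,2)] sumsets(1) by linarith
  consider "W' = {}" | "T' = {}" | "W' \<noteq> {}" "T' \<noteq> {}"
    by blast
  then show ?thesis
  proof cases
    case 1
    then show ?thesis using TW card_stab by simp
  next
    case 2
    have "(+) y ` stab Q \<subseteq> Q - P"
      using 2 assms(4) by (auto simp: T'_def add.commute[of y] intro: stab_add_mem)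
    then have "card (stab Q) \<le> card (Q - P)"
      using assms by (simp add: card_le_card_if_translate_subset)
    then show ?thesis by simp
  next
    case 3
    then have "card T' + card W' \<le> card (P - Q) + card (stab Q \<inter> stab P)"
      using card_add_card_le_sumset_stab[OF fin(2,1) subsets(3,4)] sumsets(2) by linarith
    then have "card T' + card W' \<le> card (P - Q) + card (stab P \<inter> stab Q)"
      by (simp only: Int_commute)
    then show ?thesis
      using TW card_stab by linarith
  qed
qed

lemma card_Un_add_card_stab_ge:
  fixes C1 C2 :: "'a::ab_group_add set"
  assumes "finite C1" "finite C2" "C1 \<noteq> {}" "C2 \<noteq> {}"
    and "N \<le> card C1 + card (stab C1)" "N \<le> card C2 + card (stab C2)"
  shows "N \<le> card (C1 \<union> C2) + card (stab (C1 \<union> C2))"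
proof (cases "C2 \<subseteq> C1 \<or> C1 \<subseteq> C2")
  case True
  then show ?thesis
    using assms(5,6) by (auto simp: sup.absorb1 sup.absorb2)
next
  case False
  then obtain y z where y: "y \<in> C2" "y \<notin> C1" and z: "z \<in> C1" "z \<notin> C2"
    by blast
  have "finite (stab (C1 \<union> C2))"
    using assms by (simp add: finite_stab)
  then have K: "card (stab C1 \<inter> stab C2) \<le> card (stab (C1 \<union> C2))"
    by (rule card_mono) (rule stab_Int_stab_subset_stab_Un)
  have "card (C1 \<union> C2) = card C1 + card (C2 - C1)" "card (C1 \<union> C2) = card C2 + card (C1 - C2)"
    using assms(1,2) by (simp_all add: card_Un_disjoint[symmetric] Un_Diff_cancel Un_Diff_cancel2 Un_commute)
  moreover have "card (stab C1) \<le> card (C2 - C1) + card (stab C1 \<inter> stab C2)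
      \<or> card (stab C2) \<le> card (C1 - C2) + card (stab C1 \<inter> stab C2)
      \<or> card (stab C2) \<le> card (C2 - C1)"
    using card_stab_le_card_Diff[OF assms(1-3) y] .
  moreover have "card (stab C2) \<le> card (C1 - C2) + card (stab C2 \<inter> stab C1)
      \<or> card (stab C1) \<le> card (C2 - C1) + card (stab C2 \<inter> stab C1)
      \<or> card (stab C1) \<le> card (C1 - C2)"
    using card_stab_le_card_Diff[OF assms(2,1,4) z] .
  ultimately show ?thesis
    using K assms(5,6) by (simp only: Int_commute[of "stab C2"]) linarith
qed

lemma card_UN_add_card_stab_ge:
  fixes C :: "'i \<Rightarrow> 'a::ab_group_add set"
  assumes "finite I" "I \<noteq> {}"
    and "\<And>i. i \<in> I \<Longrightarrow> finite (C i) \<and> C i \<noteq> {} \<and> N \<le> card (C i) + card (stab (C i))"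
  shows "N \<le> card (\<Union>i\<in>I. C i) + card (stab (\<Union>i\<in>I. C i))"
  using assms
proof (induction I rule: finite_ne_induct)
  case (singleton i)
  then show ?case by simp
next
  case (insert i I)
  then show ?case
    using card_Un_add_card_stab_ge[of "C i" "\<Union>i\<in>I. C i"] by auto
qed

text \<open>Dyson's e-transform replaces \<open>(A, B)\<close> by \<open>(A \<union> (e + B), B \<inter> (A - e))\<close>.\<close>

lemma card_e_transform:
  fixes A B :: "'a::ab_group_add set"
  assumes "finite A" "finite B"
  shows "card (A \<union> (+) e ` B) + card {y \<in> B. e + y \<in> A} = card A + card B"
proof -
  have "A \<inter> (+) e ` B = (+) e ` {y \<in> B. e + y \<in> A}"
    by auto
  then have "card (A \<inter> (+) e ` B) = card {y \<in> B. e + y \<in> A}"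
    by (simp add: card_translate)
  moreover have "card A + card ((+) e ` B) = card (A \<union> (+) e ` B) + card (A \<inter> (+) e ` B)"
    by (rule card_Un_Int) (use assms in auto)
  ultimately show ?thesis
    by (simp add: card_translate)
qed

lemma sumset_e_transform_subset:
  "sumset (A \<union> (+) e ` B) {y \<in> B. e + y \<in> A} \<subseteq> sumset A B"
proof
  fix z assume "z \<in> sumset (A \<union> (+) e ` B) {y \<in> B. e + y \<in> A}"
  then obtain u y where u: "u \<in> A \<union> (+) e ` B" and y: "y \<in> B" "e + y \<in> A" and z: "z = u + y"
    by (auto simp: sumset_def)
  from u show "z \<in> sumset A B"
  proof
    assume "u \<in> A"
    then show ?thesis using y z by blast
  next
    assume "u \<in> (+) e ` B"
    then obtain b where "b \<in> B" "z = (e + y) + b"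
      using z by (auto simp: ac_simps)
    then show ?thesis using y by blast
  qed
qed

lemma ex_e_transform_shrinking:
  fixes A B :: "'a::ab_group_add set"
  assumes "finite A" "\<not> (+) (- b) ` B \<subseteq> stab A"
  shows "\<exists>e. e + b \<in> A \<and> (\<exists>y\<in>B. e + y \<notin> A)"
proof -
  obtain y where "y \<in> B" "- b + y \<notin> stab A"
    using assms(2) by auto
  then obtain a where "a \<in> A" "- b + y + a \<notin> A"
    using in_stab_iff[OF assms(1)] by blast
  then have "(a - b) + b \<in> A" "(a - b) + y \<notin> A"
    by (simp_all add: algebra_simps)
  with \<open>y \<in> B\<close> show ?thesis by blast
qed

lemma kneser_weak_if_translate_subset_stab:
  fixes A B :: "'a::ab_group_add set"
  assumes "finite A" "A \<noteq> {}" "finite B" "b \<in> B" "(+) (- b) ` B \<subseteq> stab A"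
  shows "card A + card B \<le> card (sumset A B) + card (stab (sumset A B))"
proof -
  have "finite (sumset A B)" "sumset A B \<noteq> {}"
    using assms by (auto simp: finite_sumset)
  then have "finite (stab (sumset A B))"
    by (rule finite_stab)
  moreover note \<open>finite (sumset A B)\<close>
  moreover have "(+) b ` A \<subseteq> sumset A B"
    using assms(4) by (auto simp: add.commute)
  moreover have "(+) (- b) ` B \<subseteq> stab (sumset A B)"
    using assms(5) stab_subset_stab_sumset by blast
  ultimately show ?thesis
    using card_le_card_if_translate_subset add_mono by metis
qed

theorem kneser_weak:
  fixes A B :: "'a::ab_group_add set"
  assumes "finite A" "A \<noteq> {}" "finite B" "B \<noteq> {}"
  shows "card A + card B \<le> card (sumset A B) + card (stab (sumset A B))"
  using assms
proof (induction "card B" arbitrary: A B rule: less_induct)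
  case less
  show ?case
  proof (cases "\<exists>b\<in>B. (+) (- b) ` B \<subseteq> stab A")
    case True
    then show ?thesis
      using kneser_weak_if_translate_subset_stab less.prems by blast
  next
    case False
    then have "\<forall>b\<in>B. \<exists>e. e + b \<in> A \<and> (\<exists>y\<in>B. e + y \<notin> A)"
      using ex_e_transform_shrinking[OF \<open>finite A\<close>] by blast
    then obtain e where e: "\<forall>b\<in>B. e b + b \<in> A \<and> (\<exists>y\<in>B. e b + y \<notin> A)"
      by (metis bchoice)
    define C where "C b = sumset (A \<union> (+) (e b) ` B) {y \<in> B. e b + y \<in> A}" for b
    have "finite (C b) \<and> C b \<noteq> {} \<and> card A + card B \<le> card (C b) + card (stab (C b))"
      if "b \<in> B" for b
    proof -
      have "b \<in> {y \<in> B. e b + y \<in> A}" "{y \<in> B. e b + y \<in> A} \<subset> B"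
        using e that by auto
      moreover from this have "card {y \<in> B. e b + y \<in> A} < card B"
        using less.prems by (simp add: psubset_card_mono)
      ultimately show ?thesis
        using less.hyps[of "{y \<in> B. e b + y \<in> A}" "A \<union> (+) (e b) ` B"] less.prems
          card_e_transform[of A B "e b"]
        by (auto simp: C_def finite_sumset)
    qed
    moreover have "(\<Union>b\<in>B. C b) = sumset A B"
    proof
      show "(\<Union>b\<in>B. C b) \<subseteq> sumset A B"
        using sumset_e_transform_subset by (auto simp: C_def)
      show "sumset A B \<subseteq> (\<Union>b\<in>B. C b)"
        using e by (fastforce simp: C_def sumset_def)
    qed
    ultimately show ?thesis
      using card_UN_add_card_stab_ge[of B C] less.prems by simp
  qed
qed

lemma sumset_sumset_stab_eq:
  fixes A B :: "'a::ab_group_add set"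
  assumes "H = stab (sumset A B)"
  shows "sumset (sumset A H) (sumset B H) = sumset A B"
proof (intro equalityI subsetI)
  fix z assume "z \<in> sumset (sumset A H) (sumset B H)"
  then obtain a b g h where "a \<in> A" "b \<in> B" "g \<in> H" "h \<in> H" "z = (a + g) + (b + h)"
    by (auto simp: sumset_def)
  moreover from this have "z = (g + h) + (a + b)"
    by (simp add: ac_simps)
  ultimately show "z \<in> sumset A B"
    using assms by (auto intro: stab_add stab_add_mem)
next
  fix z assume "z \<in> sumset A B"
  then obtain a b where "a \<in> A" "b \<in> B" "z = (a + 0) + (b + 0)"
    by (auto simp: sumset_def)
  moreover have "0 \<in> H"
    using assms by simp
  ultimately show "z \<in> sumset (sumset A H) (sumset B H)"
    by blast
qed

theorem kneser:
  fixes A B :: "'a::ab_group_add set"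
  assumes "finite A" "A \<noteq> {}" "finite B" "B \<noteq> {}" "H = stab (sumset A B)"
  shows "card (sumset A H) + card (sumset B H) \<le> card (sumset A B) + card H"
proof -
  have "finite H"
    using assms by (simp add: finite_stab finite_sumset)
  moreover have "H \<noteq> {}"
    using assms zero_in_stab by blast
  ultimately show ?thesis
    using kneser_weak[of "sumset A H" "sumset B H"] assms
    by (simp add: finite_sumset sumset_sumset_stab_eq)
qed

lemma card_sumset_insert_le:
  "card (sumset (insert x A) H) \<le> card (sumset A H) + card (H :: 'a::ab_group_add set)"
  using card_Un_le[of "(+) x ` H" "sumset A H"] by (simp add: sumset_insert card_translate)

lemma card_sumset_insert_ge:
  fixes A B H :: "'a::ab_group_add set"
  assumes "finite A" "finite B" "finite H" "H \<subseteq> stab B" "H \<subseteq> stab (sumset A B)"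
    and "y \<in> B" "x + y \<notin> sumset A B"
  shows "card (sumset A B) + card H \<le> card (sumset (insert x A) B)"
proof -
  have "(+) (x + y) ` H \<subseteq> (+) x ` B"
    using assms(4,6) by (auto simp: add.assoc add.commute[of y] intro: stab_add_mem)
  then have "(+) (x + y) ` H \<union> sumset A B \<subseteq> sumset (insert x A) B"
    by (auto simp: sumset_insert)
  moreover have "h + (x + y) \<notin> sumset A B" if "h \<in> H" for h
    using that assms(5,7) stab_add_mem_iff by blast
  then have "(+) (x + y) ` H \<inter> sumset A B = {}"
    by (auto simp: ac_simps)
  ultimately have "card ((+) (x + y) ` H) + card (sumset A B) \<le> card (sumset (insert x A) B)"
    using assms(1-3) card_mono[of "sumset (insert x A) B"]
    by (metis card_Un_disjoint finite_imageI finite_insert finite_sumset)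
  then show ?thesis
    by (simp add: card_translate)
qed

theorem lemma2p6:
  fixes A B H :: "'a::ab_group_add set" and x :: 'a
  assumes "finite A" "A \<noteq> {}" "finite B" "B \<noteq> {}"
    and "H = stab (sumset A B)" and "H = stab B"
  shows "int (card (sumset (A \<union> {x}) B))
           \<ge> int (card (sumset (A \<union> {x}) H)) + int (card (sumset B H)) - int (card H)"
proof (cases "(+) x ` B \<subseteq> sumset A B")
  case True
  then have "sumset (insert x A) B = sumset A B"
    by (auto simp: sumset_insert)
  then show ?thesis
    using kneser[of "insert x A" B H] assms by simp
next
  case False
  then obtain y where "y \<in> B" "x + y \<notin> sumset A B"
    by auto
  moreover have "finite H"
    using assms(3,4,6) finite_stab by blast
  ultimately have "card (sumset A B) + card H \<le> card (sumset (insert x A) B)"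
    using card_sumset_insert_ge[of A B H y x] assms by simp
  moreover have "card (sumset (insert x A) H) \<le> card (sumset A H) + card H"
    by (rule card_sumset_insert_le)
  ultimately show ?thesis
    using kneser[of A B H] assms by simp
qed

end
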